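(* Let $k$ be a field, $X$ a finite non-empty set, and for every $a\in X$ let $\sigma_a,\tau_a:X\to X$ be maps with each $\sigma_a$ bijective; let ${\cal A}$ be the special set-theoretic Yang–Baxter algebra of these data. Suppose $(X,+,\circ)$ is a skew brace and, for all $a,b\in X$, \[\sigma_a(b)=-a+a\circ b,\qquad \sigma_{\sigma_a(b)}(\tau_b(a))=a.\] Then $w_0$ is a central element of ${\cal A}$, where $0$ is the common neutral element of $(X,+)$ and $(X,\circ)$.
   Context: The special set-theoretic Yang–Baxter algebra ${\cal A}$ is the unital associative $k$-algebra generated by $1_{\cal A},h_a,w_a,w_a^{-1}$ ($a\in X$) subject to, for all $a,b\in X$: $h_ah_b=\delta_{a,b}h_a$, $w_a^{-1}w_a=w_aw_a^{-1}=1_{\cal A}$, $w_aw_b=w_{\sigma_a(b)}w_{\tau_b(a)}$, $w_ah_b=h_{\sigma_a(b)}w_a$, and $\sum_{a\in X}h_a=1_{\cal A}$. A skew (left) brace is a set $X$ with two group operations $+$ and $\circ$ such that $a\circ(b+c)=a\circ b-a+a\circ c$ for all $a,b,c\in X$; the neutral elements of the two groups coincide and are denoted $0$. *)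

theory Defs
  imports Main "HOL-Algebra.Group"
begin

definition grp_on :: "('x \<Rightarrow> 'x \<Rightarrow> 'x) \<Rightarrow> 'x \<Rightarrow> 'x monoid" where
  "grp_on op e = \<lparr>carrier = UNIV, mult = op, one = e\<rparr>"

definition skew_brace :: "('x \<Rightarrow> 'x \<Rightarrow> 'x) \<Rightarrow> ('x \<Rightarrow> 'x \<Rightarrow> 'x) \<Rightarrow> 'x \<Rightarrow> bool" where
  "skew_brace pl ci e \<longleftrightarrow> group (grp_on pl e) \<and> group (grp_on ci e) \<and>
     (\<forall>a b c. ci a (pl b c) = pl (pl (ci a b) (inv\<^bsub>grp_on pl e\<^esub> a)) (ci a c))"

definition sb_neg :: "('x \<Rightarrow> 'x \<Rightarrow> 'x) \<Rightarrow> 'x \<Rightarrow> 'x \<Rightarrow> 'x" where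
  "sb_neg pl e a = inv\<^bsub>grp_on pl e\<^esub> a"

datatype 'x gen = H 'x | W 'x | Winv 'x

text \<open>Elements of the free algebra: finitely supported functions from words to k.\<close>
type_synonym ('x, 'k) fa = "'x gen list \<Rightarrow> 'k"

definition fa_elem :: "('x, 'k::zero) fa \<Rightarrow> bool" where
  "fa_elem f \<longleftrightarrow> finite {w. f w \<noteq> 0}"

definition fa_zero :: "('x, 'k::zero) fa" where "fa_zero = (\<lambda>w. 0)"
definition fa_add :: "('x, 'k::plus) fa \<Rightarrow> ('x, 'k) fa \<Rightarrow> ('x, 'k) fa" where
  "fa_add f g = (\<lambda>w. f w + g w)"
definition fa_diff :: "('x, 'k::minus) fa \<Rightarrow> ('x, 'k) fa \<Rightarrow> ('x, 'k) fa" where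
  "fa_diff f g = (\<lambda>w. f w - g w)"
definition fa_mult :: "('x, 'k::comm_semiring_1) fa \<Rightarrow> ('x, 'k) fa \<Rightarrow> ('x, 'k) fa" where
  "fa_mult f g = (\<lambda>w. \<Sum>i\<le>length w. f (take i w) * g (drop i w))"
definition fa_word :: "'x gen list \<Rightarrow> ('x, 'k::{zero,one}) fa" where
  "fa_word u = (\<lambda>w. if w = u then 1 else 0)"
definition fa_one :: "('x, 'k::{zero,one}) fa" where "fa_one = fa_word []"
definition fa_gen :: "'x gen \<Rightarrow> ('x, 'k::{zero,one}) fa" where "fa_gen g = fa_word [g]"

text \<open>Each relation "lhs = rhs" is encoded as the element lhs - rhs of the free algebra.\<close>
definition ybe_relations ::
  "('x::finite \<Rightarrow> 'x \<Rightarrow> 'x) \<Rightarrow> ('x \<Rightarrow> 'x \<Rightarrow> 'x) \<Rightarrow> ('x, 'k::field) fa set" where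
  "ybe_relations \<sigma> \<tau> =
     {fa_diff (fa_mult (fa_gen (H a)) (fa_gen (H b))) (if a = b then fa_gen (H a) else fa_zero) | a b. True}
   \<union> {fa_diff (fa_mult (fa_gen (Winv a)) (fa_gen (W a))) fa_one | a. True}
   \<union> {fa_diff (fa_mult (fa_gen (W a)) (fa_gen (Winv a))) fa_one | a. True}
   \<union> {fa_diff (fa_mult (fa_gen (W a)) (fa_gen (W b)))
              (fa_mult (fa_gen (W (\<sigma> a b))) (fa_gen (W (\<tau> b a)))) | a b. True}
   \<union> {fa_diff (fa_mult (fa_gen (W a)) (fa_gen (H b)))
              (fa_mult (fa_gen (H (\<sigma> a b))) (fa_gen (W a))) | a b. True}
   \<union> {fa_diff (\<lambda>w. \<Sum>a\<in>UNIV. fa_gen (H a) w) fa_one}"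

inductive_set ybe_ideal ::
  "('x::finite \<Rightarrow> 'x \<Rightarrow> 'x) \<Rightarrow> ('x \<Rightarrow> 'x \<Rightarrow> 'x) \<Rightarrow> ('x, 'k::field) fa set"
  for \<sigma> \<tau> where
  rel: "r \<in> ybe_relations \<sigma> \<tau> \<Longrightarrow> r \<in> ybe_ideal \<sigma> \<tau>"
| zero: "fa_zero \<in> ybe_ideal \<sigma> \<tau>"
| add: "f \<in> ybe_ideal \<sigma> \<tau> \<Longrightarrow> g \<in> ybe_ideal \<sigma> \<tau> \<Longrightarrow> fa_add f g \<in> ybe_ideal \<sigma> \<tau>"
| mult: "f \<in> ybe_ideal \<sigma> \<tau> \<Longrightarrow> fa_elem p \<Longrightarrow> fa_elem q \<Longrightarrow>
         fa_mult (fa_mult p f) q \<in> ybe_ideal \<sigma> \<tau>"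

text \<open>An element x of the free algebra represents a central element of the quotient
  algebra A = free algebra / ideal iff x y - y x lies in the ideal for all y.\<close>
definition ybe_central :: "('x::finite \<Rightarrow> 'x \<Rightarrow> 'x) \<Rightarrow> ('x \<Rightarrow> 'x \<Rightarrow> 'x) \<Rightarrow> ('x, 'k::field) fa \<Rightarrow> bool" where
  "ybe_central \<sigma> \<tau> x \<longleftrightarrow>
     (\<forall>y. fa_elem y \<longrightarrow> fa_diff (fa_mult x y) (fa_mult y x) \<in> ybe_ideal \<sigma> \<tau>)"

end

theory Submission
  imports Defs
begin

(* In a skew brace sigma_0 is the identity and every sigma_b fixes 0; as sigma_b is injective,
   the hypothesis sigma_(sigma_0 b) (tau_b 0) = 0 then forces tau_b 0 = 0.  Hence the defining
   relations specialise to w_0 h_b = h_b w_0 and w_0 w_b = w_b w_0, and multiplying the latter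
   by w_b^-1 on both sides gives w_0 w_b^-1 = w_b^-1 w_0.  An element commuting with all
   generators is central. *)

lemma fa_mult_word: "fa_mult (fa_word u) (fa_word v) = (fa_word (u @ v) :: ('x, 'k::comm_semiring_1) fa)"
proof (rule ext)
  fix w :: "'x gen list"
  have split: "(take i w = u \<and> drop i w = v) \<longleftrightarrow> (i = length u \<and> w = u @ v)"
    if "i \<le> length w" for i
    using that by (auto simp: append_eq_conv_conj)
  have "fa_mult (fa_word u) (fa_word v) w
      = (\<Sum>i\<le>length w. if i = length u \<and> w = u @ v then 1 else (0::'k))"
    unfolding fa_mult_def fa_word_def by (intro sum.cong) (auto simp: split)
  also have "\<dots> = fa_word (u @ v) w"
    by (auto simp: fa_word_def)
  finally show "fa_mult (fa_word u) (fa_word v) w = (fa_word (u @ v) w :: 'k)" .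
qed

lemma fa_mult_one_left: "fa_mult fa_one f = (f :: ('x, 'k::comm_semiring_1) fa)"
proof (rule ext)
  fix w :: "'x gen list"
  have "fa_mult fa_one f w = (\<Sum>i\<le>length w. if i = 0 then f w else 0)"
    unfolding fa_mult_def fa_one_def fa_word_def by (intro sum.cong) auto
  then show "fa_mult fa_one f w = f w" by simp
qed

lemma fa_mult_one_right: "fa_mult f fa_one = (f :: ('x, 'k::comm_semiring_1) fa)"
proof (rule ext)
  fix w :: "'x gen list"
  have "fa_mult f fa_one w = (\<Sum>i\<le>length w. if i = length w then f w else 0)"
    unfolding fa_mult_def fa_one_def fa_word_def by (intro sum.cong) auto
  then show "fa_mult f fa_one w = f w" by simp
qed

lemma fa_mult_zero_left: "fa_mult fa_zero g = (fa_zero :: ('x, 'k::comm_semiring_1) fa)"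
  unfolding fa_mult_def fa_zero_def by simp

lemma fa_mult_zero_right: "fa_mult g fa_zero = (fa_zero :: ('x, 'k::comm_semiring_1) fa)"
  unfolding fa_mult_def fa_zero_def by simp

lemma fa_mult_add_left: "fa_mult (fa_add f g) h = fa_add (fa_mult f h) (fa_mult g h :: ('x, 'k::comm_semiring_1) fa)"
  unfolding fa_mult_def fa_add_def by (simp add: algebra_simps sum.distrib)

lemma fa_mult_add_right: "fa_mult h (fa_add f g) = fa_add (fa_mult h f) (fa_mult h g :: ('x, 'k::comm_semiring_1) fa)"
  unfolding fa_mult_def fa_add_def by (simp add: algebra_simps sum.distrib)

lemma fa_mult_diff_left: "fa_mult (fa_diff f g) h = fa_diff (fa_mult f h) (fa_mult g h :: ('x, 'k::comm_ring_1) fa)"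
  unfolding fa_mult_def fa_diff_def by (simp add: algebra_simps sum_subtractf)

lemma fa_mult_diff_right: "fa_mult h (fa_diff f g) = fa_diff (fa_mult h f) (fa_mult h g :: ('x, 'k::comm_ring_1) fa)"
  unfolding fa_mult_def fa_diff_def by (simp add: algebra_simps sum_subtractf)

lemma fa_mult_smult_left: "fa_mult (\<lambda>w. c * f w) g = (\<lambda>w. (c::'k::comm_semiring_1) * fa_mult f g w)"
  unfolding fa_mult_def by (simp add: sum_distrib_left mult_ac)

lemma fa_mult_smult_right: "fa_mult g (\<lambda>w. c * f w) = (\<lambda>w. (c::'k::comm_semiring_1) * fa_mult g f w)"
  unfolding fa_mult_def by (simp add: sum_distrib_left mult_ac)

lemma fa_elem_word: "fa_elem (fa_word u :: ('x, 'k::{zero,one}) fa)"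
proof -
  have "{w. (fa_word u w :: 'k) \<noteq> 0} \<subseteq> {u}" by (auto simp: fa_word_def)
  then show ?thesis unfolding fa_elem_def by (rule finite_subset) simp
qed

lemma fa_elem_one: "fa_elem (fa_one :: ('x, 'k::{zero,one}) fa)"
  unfolding fa_one_def by (rule fa_elem_word)

lemma fa_elem_smult: "fa_elem f \<Longrightarrow> fa_elem (\<lambda>w. (c::'k::mult_zero) * f w)"
  unfolding fa_elem_def by (rule finite_subset[rotated]) auto

lemma fa_elem_induct[consumes 1, case_names zero add_monom]:
  fixes y :: "('x, 'k::comm_semiring_1) fa"
  assumes "fa_elem y"
    and zero: "P fa_zero"
    and add_monom: "\<And>y c u. P y \<Longrightarrow> P (fa_add y (\<lambda>w. c * fa_word u w))"
  shows "P y"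
proof -
  have "\<forall>y. {w. y w \<noteq> 0} \<subseteq> S \<longrightarrow> P y" if "finite S" for S
    using that
  proof (induction S rule: finite_induct)
    case empty
    have "y = fa_zero" if "{w. y w \<noteq> 0} \<subseteq> {}" for y :: "('x, 'k) fa"
      using that unfolding fa_zero_def by auto
    then show ?case using zero by blast
  next
    case (insert u S)
    show ?case
    proof (intro allI impI)
      fix y :: "('x, 'k) fa"
      assume "{w. y w \<noteq> 0} \<subseteq> insert u S"
      then have "{w. (y(u := 0)) w \<noteq> 0} \<subseteq> S" by auto
      then have "P (y(u := 0))" using insert.IH by blast
      moreover have "y = fa_add (y(u := 0)) (\<lambda>w. y u * fa_word u w)"
        by (simp add: fun_eq_iff fa_add_def fa_word_def)
      ultimately show "P y" by (metis add_monom)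
    qed
  qed
  then show ?thesis using \<open>fa_elem y\<close> unfolding fa_elem_def by blast
qed

lemma ybe_ideal_mult_left: "f \<in> ybe_ideal \<sigma> \<tau> \<Longrightarrow> fa_elem p \<Longrightarrow> fa_mult p f \<in> ybe_ideal \<sigma> \<tau>"
  using ybe_ideal.mult[OF _ _ fa_elem_one] by (metis fa_mult_one_right)

lemma ybe_ideal_mult_right: "f \<in> ybe_ideal \<sigma> \<tau> \<Longrightarrow> fa_elem q \<Longrightarrow> fa_mult f q \<in> ybe_ideal \<sigma> \<tau>"
  using ybe_ideal.mult[OF _ fa_elem_one] by (metis fa_mult_one_left)

lemma ybe_ideal_smult:
  assumes "f \<in> ybe_ideal \<sigma> \<tau>"
  shows "(\<lambda>w. c * f w) \<in> ybe_ideal \<sigma> \<tau>"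
proof -
  have "fa_mult (\<lambda>w. c * fa_one w) f \<in> ybe_ideal \<sigma> \<tau>"
    using assms by (intro ybe_ideal_mult_left fa_elem_smult fa_elem_one)
  then show ?thesis by (simp add: fa_mult_smult_left fa_mult_one_left)
qed

lemma ybe_ideal_diff:
  assumes "f \<in> ybe_ideal \<sigma> \<tau>" "g \<in> ybe_ideal \<sigma> \<tau>"
  shows "fa_diff f g \<in> ybe_ideal \<sigma> \<tau>"
proof -
  have "fa_add f (\<lambda>w. (-1) * g w) \<in> ybe_ideal \<sigma> \<tau>"
    using assms by (intro ybe_ideal.add ybe_ideal_smult)
  moreover have "fa_add f (\<lambda>w. (-1) * g w) = fa_diff f g"
    unfolding fa_add_def fa_diff_def by simp
  ultimately show ?thesis by simp
qed

lemma ybe_ideal_W_H: "fa_diff (fa_word [W a, H b]) (fa_word [H (\<sigma> a b), W a]) \<in> ybe_ideal \<sigma> \<tau>"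
  by (rule ybe_ideal.rel) (auto simp: ybe_relations_def fa_gen_def fa_mult_word)

lemma ybe_ideal_W_W: "fa_diff (fa_word [W a, W b]) (fa_word [W (\<sigma> a b), W (\<tau> b a)]) \<in> ybe_ideal \<sigma> \<tau>"
  by (rule ybe_ideal.rel) (auto simp: ybe_relations_def fa_gen_def fa_mult_word)

lemma ybe_ideal_W_Winv: "fa_diff (fa_word [W a, Winv a]) fa_one \<in> ybe_ideal \<sigma> \<tau>"
  by (rule ybe_ideal.rel) (auto simp: ybe_relations_def fa_gen_def fa_mult_word)

lemma ybe_ideal_Winv_W: "fa_diff (fa_word [Winv a, W a]) fa_one \<in> ybe_ideal \<sigma> \<tau>"
  by (rule ybe_ideal.rel) (auto simp: ybe_relations_def fa_gen_def fa_mult_word)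

definition fa_commutator :: "('x, 'k::comm_ring_1) fa \<Rightarrow> ('x, 'k) fa \<Rightarrow> ('x, 'k) fa" where
  "fa_commutator f g = fa_diff (fa_mult f g) (fa_mult g f)"

lemma fa_commutator_word_append:
  "fa_commutator (fa_word a) (fa_word (u @ v)) =
     fa_add (fa_mult (fa_commutator (fa_word a) (fa_word u)) (fa_word v))
            (fa_mult (fa_word u) (fa_commutator (fa_word a) (fa_word v)) :: ('x, 'k::comm_ring_1) fa)"
  unfolding fa_commutator_def
  by (simp add: fa_mult_diff_left fa_mult_diff_right fa_mult_word)
     (simp add: fun_eq_iff fa_diff_def fa_add_def)

lemma fa_commutator_zero_right: "fa_commutator f fa_zero = (fa_zero :: ('x, 'k::comm_ring_1) fa)"
  unfolding fa_commutator_def fa_mult_zero_left fa_mult_zero_right by (simp add: fa_diff_def fa_zero_def)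

lemma fa_commutator_one_right: "fa_commutator f fa_one = (fa_zero :: ('x, 'k::comm_ring_1) fa)"
  unfolding fa_commutator_def fa_mult_one_left fa_mult_one_right by (simp add: fa_diff_def fa_zero_def)

lemma fa_commutator_add_right:
  "fa_commutator f (fa_add g h) = fa_add (fa_commutator f g) (fa_commutator f h :: ('x, 'k::comm_ring_1) fa)"
  unfolding fa_commutator_def
  by (simp add: fa_mult_add_left fa_mult_add_right) (simp add: fun_eq_iff fa_diff_def fa_add_def)

lemma fa_commutator_smult_right:
  "fa_commutator f (\<lambda>w. c * g w) = (\<lambda>w. c * fa_commutator f g w :: 'k::comm_ring_1)"
  unfolding fa_commutator_def
  by (simp add: fa_mult_smult_left fa_mult_smult_right) (simp add: fun_eq_iff fa_diff_def algebra_simps)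

lemma ybe_central_iff: "ybe_central \<sigma> \<tau> x \<longleftrightarrow> (\<forall>y. fa_elem y \<longrightarrow> fa_commutator x y \<in> ybe_ideal \<sigma> \<tau>)"
  unfolding ybe_central_def fa_commutator_def ..

lemma ybe_commutator_word_inverse:
  fixes \<sigma> \<tau> :: "'x::finite \<Rightarrow> 'x \<Rightarrow> 'x"
  assumes "fa_commutator (fa_word a) (fa_word w) \<in> (ybe_ideal \<sigma> \<tau> :: ('x, 'k::field) fa set)"
    and "fa_diff (fa_word (w @ v)) fa_one \<in> (ybe_ideal \<sigma> \<tau> :: ('x, 'k) fa set)"
    and "fa_diff (fa_word (v @ w)) fa_one \<in> (ybe_ideal \<sigma> \<tau> :: ('x, 'k) fa set)"
  shows "fa_commutator (fa_word a) (fa_word v) \<in> (ybe_ideal \<sigma> \<tau> :: ('x, 'k) fa set)"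
proof -
  \<comment> \<open>a v - v a = v a (w v - 1) - v (a w - w a) v - (v w - 1) a v\<close>
  let ?r = "fa_diff (fa_diff (fa_mult (fa_word (v @ a)) (fa_diff (fa_word (w @ v)) fa_one))
              (fa_mult (fa_mult (fa_word v) (fa_commutator (fa_word a) (fa_word w))) (fa_word v)))
              (fa_mult (fa_diff (fa_word (v @ w)) fa_one) (fa_word (a @ v))) :: ('x, 'k) fa"
  have "fa_mult (fa_word (v @ a)) (fa_diff (fa_word (w @ v)) fa_one) \<in> (ybe_ideal \<sigma> \<tau> :: ('x, 'k) fa set)"
    using assms(2) by (rule ybe_ideal_mult_left[OF _ fa_elem_word])
  moreover have "fa_mult (fa_mult (fa_word v) (fa_commutator (fa_word a) (fa_word w))) (fa_word v)
      \<in> (ybe_ideal \<sigma> \<tau> :: ('x, 'k) fa set)"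
    using assms(1) by (rule ybe_ideal.mult[OF _ fa_elem_word fa_elem_word])
  moreover have "fa_mult (fa_diff (fa_word (v @ w)) fa_one) (fa_word (a @ v)) \<in> (ybe_ideal \<sigma> \<tau> :: ('x, 'k) fa set)"
    using assms(3) by (rule ybe_ideal_mult_right[OF _ fa_elem_word])
  ultimately have "?r \<in> (ybe_ideal \<sigma> \<tau> :: ('x, 'k) fa set)"
    by (intro ybe_ideal_diff)
  moreover have "?r = fa_commutator (fa_word a) (fa_word v)"
    unfolding fa_commutator_def
    by (simp add: fa_mult_diff_left fa_mult_diff_right fa_mult_word fa_mult_one_left fa_mult_one_right)
       (simp add: fun_eq_iff fa_diff_def algebra_simps)
  ultimately show ?thesis by simp
qed

lemma ybe_commutator_word_words:
  fixes \<sigma> \<tau> :: "'x::finite \<Rightarrow> 'x \<Rightarrow> 'x"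
  assumes "\<And>g. fa_commutator (fa_word a) (fa_gen g) \<in> (ybe_ideal \<sigma> \<tau> :: ('x, 'k::field) fa set)"
  shows "fa_commutator (fa_word a) (fa_word u) \<in> (ybe_ideal \<sigma> \<tau> :: ('x, 'k) fa set)"
proof (induction u)
  case Nil
  show ?case
    unfolding fa_one_def[symmetric] fa_commutator_one_right by (rule ybe_ideal.zero)
next
  case (Cons g u)
  have "fa_commutator (fa_word a) (fa_word [g]) \<in> (ybe_ideal \<sigma> \<tau> :: ('x, 'k) fa set)"
    using assms[of g] by (simp add: fa_gen_def)
  then have "fa_commutator (fa_word a) (fa_word ([g] @ u)) \<in> (ybe_ideal \<sigma> \<tau> :: ('x, 'k) fa set)"
    unfolding fa_commutator_word_append using Cons.IH
    by (intro ybe_ideal.add ybe_ideal_mult_right[OF _ fa_elem_word] ybe_ideal_mult_left[OF _ fa_elem_word])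
  then show ?case by simp
qed

lemma ybe_central_wordI:
  fixes \<sigma> \<tau> :: "'x::finite \<Rightarrow> 'x \<Rightarrow> 'x"
  assumes "\<And>g. fa_commutator (fa_word a) (fa_gen g) \<in> (ybe_ideal \<sigma> \<tau> :: ('x, 'k::field) fa set)"
  shows "ybe_central \<sigma> \<tau> (fa_word a :: ('x, 'k) fa)"
  unfolding ybe_central_iff
proof (intro allI impI)
  fix y :: "('x, 'k) fa"
  assume "fa_elem y"
  then show "fa_commutator (fa_word a) y \<in> ybe_ideal \<sigma> \<tau>"
  proof (induction rule: fa_elem_induct)
    case zero
    then show ?case by (simp add: fa_commutator_zero_right ybe_ideal.zero)
  next
    case (add_monom y c u)
    have "fa_commutator (fa_word a) (fa_word u) \<in> (ybe_ideal \<sigma> \<tau> :: ('x, 'k) fa set)"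
      using assms by (rule ybe_commutator_word_words)
    then show ?case
      unfolding fa_commutator_add_right fa_commutator_smult_right
      using add_monom.IH by (intro ybe_ideal.add ybe_ideal_smult)
  qed
qed

lemma ybe_central_W:
  assumes sigma_e: "\<And>b. \<sigma> e b = b" and tau_e: "\<And>b. \<tau> b e = e"
  shows "ybe_central \<sigma> \<tau> (fa_gen (W e) :: ('x::finite, 'k::field) fa)"
proof -
  have W_comm: "fa_commutator (fa_word [W e]) (fa_word [W b]) \<in> (ybe_ideal \<sigma> \<tau> :: ('x, 'k) fa set)" for b
    using ybe_ideal_W_W[where \<sigma>=\<sigma> and \<tau>=\<tau> and a=e and b=b] by (simp add: fa_commutator_def fa_mult_word sigma_e tau_e)
  have "fa_commutator (fa_word [W e]) (fa_gen g) \<in> (ybe_ideal \<sigma> \<tau> :: ('x, 'k) fa set)" for g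
  proof (cases g)
    case (H b)
    then show ?thesis
      using ybe_ideal_W_H[where \<sigma>=\<sigma> and \<tau>=\<tau> and a=e and b=b] by (simp add: fa_commutator_def fa_gen_def fa_mult_word sigma_e)
  next
    case (W b)
    then show ?thesis using W_comm by (simp add: fa_gen_def)
  next
    case (Winv b)
    then show ?thesis
      using ybe_commutator_word_inverse[OF W_comm[of b], where v="[Winv b]"]
      by (simp add: fa_gen_def ybe_ideal_W_Winv ybe_ideal_Winv_W)
  qed
  then have "ybe_central \<sigma> \<tau> (fa_word [W e] :: ('x, 'k) fa)"
    by (rule ybe_central_wordI)
  then show ?thesis by (simp add: fa_gen_def)
qed

lemma skew_brace_sigma_neutral:
  assumes "skew_brace pl ci e"
    and sigma: "\<And>a b. \<sigma> a b = pl (sb_neg pl e a) (ci a b)"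
  shows "\<sigma> e b = b" and "\<sigma> b e = e"
proof -
  interpret add: group "grp_on pl e" + mult: group "grp_on ci e"
    using assms(1) unfolding skew_brace_def by auto
  have "sb_neg pl e e = e" "pl e b = b" "ci e b = b"
    using add.inv_one add.l_one[of b] mult.l_one[of b] by (simp_all add: sb_neg_def grp_on_def)
  then show "\<sigma> e b = b" by (simp add: sigma)
  have "ci b e = b" "pl (sb_neg pl e b) b = e"
    using mult.r_one[of b] add.l_inv[of b] by (simp_all add: sb_neg_def grp_on_def)
  then show "\<sigma> b e = e" by (simp add: sigma)
qed

theorem lemma2p15:
  fixes \<sigma> \<tau> :: "'x::finite \<Rightarrow> 'x \<Rightarrow> 'x"
    and pl ci :: "'x \<Rightarrow> 'x \<Rightarrow> 'x" and e :: 'x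
  assumes "\<forall>a. bij (\<sigma> a)"
    and "skew_brace pl ci e"
    and "\<forall>a b. \<sigma> a b = pl (sb_neg pl e a) (ci a b)"
    and "\<forall>a b. \<sigma> (\<sigma> a b) (\<tau> b a) = a"
  shows "ybe_central \<sigma> \<tau> (fa_gen (W e) :: ('x, 'k::field) fa)"
proof (rule ybe_central_W)
  fix b
  have sigma_e: "\<sigma> e a = a" and sigma_fix_e: "\<sigma> a e = e" for a
    using skew_brace_sigma_neutral[OF assms(2)] assms(3) by blast+
  show "\<sigma> e b = b" by (rule sigma_e)
  have "\<sigma> b (\<tau> b e) = \<sigma> b e"
    using assms(4)[rule_format, of e b] by (simp add: sigma_e sigma_fix_e)
  then show "\<tau> b e = e"
    using assms(1) by (simp add: bij_is_inj inj_eq)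
qed

end
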